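(* For each pair of integers $s,b\ge1$, the $(s,b)$-Generacci sequence exists and is unique. Moreover, every positive integer has exactly one $(s,b)$-Generacci legal decomposition using terms of the $(s,b)$-Generacci sequence.
   Context: Fix integers $s,b\ge1$. For an increasing sequence of positive integers $(a_i)_{i\ge1}$, the bins are $\mathcal B_n=\{a_{b(n-1)+1},\dots,a_{bn}\}$ for $n\ge1$, and $\mathcal B_n=\emptyset$ for $n\le 0$. An $(s,b)$-Generacci legal decomposition of a positive integer $m$ using this sequence is an expression $m=a_{\ell_1}+\cdots+a_{\ell_k}$ with $a_{\ell_1}>a_{\ell_2}>\cdots>a_{\ell_k}$ such that for all $i$ and all $j$, $\{a_{\ell_i},a_{\ell_{i+1}}\}\not\subset \mathcal B_{j-s}\cup\mathcal B_{j-s+1}\cup\cdots\cup\mathcal B_j$ (so no two summands lie in the same bin, and the bins containing any two summands have at least $s$ bins strictly between them). The $(s,b)$-Generacci sequence is the increasing sequence of positive integers $(a_i)_{i\ge1}$ in which each $a_i$ is the smallest positive integer that has no $(s,b)$-Generacci legal decomposition using only elements of $\{a_1,\dots,a_{i-1}\}$. *)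

theory Defs
  imports Main
begin

text \<open>Sequences are functions nat => nat; only the values at indices i >= 1 matter
  (the paper indexes a_1, a_2, ...).  The value at index 0 is irrelevant.\<close>

definition gen_bin :: "nat \<Rightarrow> (nat \<Rightarrow> nat) \<Rightarrow> int \<Rightarrow> nat set" where
  "gen_bin b a n = (if n \<le> 0 then {} else a ` {b * (nat n - 1) + 1 .. b * nat n})"

definition gen_legal_decomp ::
  "nat \<Rightarrow> nat \<Rightarrow> (nat \<Rightarrow> nat) \<Rightarrow> nat set \<Rightarrow> nat \<Rightarrow> nat list \<Rightarrow> bool" where
  "gen_legal_decomp s b a T m xs \<longleftrightarrow>
     xs \<noteq> [] \<and> set xs \<subseteq> T \<and> sorted_wrt (>) xs \<and> sum_list xs = m \<and>
     (\<forall>i. Suc i < length xs \<longrightarrow>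
        (\<forall>j::int. \<not> {xs ! i, xs ! Suc i} \<subseteq> (\<Union>t\<in>{j - int s .. j}. gen_bin b a t)))"

definition is_generacci :: "nat \<Rightarrow> nat \<Rightarrow> (nat \<Rightarrow> nat) \<Rightarrow> bool" where
  "is_generacci s b a \<longleftrightarrow>
     strict_mono_on {1..} a \<and>
     (\<forall>i\<ge>1. 0 < a i \<and>
        \<not> (\<exists>xs. gen_legal_decomp s b a (a ` {1..<i}) (a i) xs) \<and>
        (\<forall>m. 0 < m \<and> m < a i \<longrightarrow> (\<exists>xs. gen_legal_decomp s b a (a ` {1..<i}) m xs)))"

end

theory Submission
  imports Defs
begin

text \<open>Legality of a decomposition depends only on the indices of its summands: index \<open>i \<ge> 1\<close>
  lies in bin \<open>(i - 1) div b + 1\<close>, and an index may follow index \<open>k + 1\<close> in a legal list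
  iff it is at most \<open>p k = b * (k div b - s)\<close>. Define \<open>G 0 = 0\<close>,
  \<open>G (k + 1) = G k + 1 + G (p k)\<close> and \<open>a i = G (i - 1) + 1\<close>. By induction on \<open>k\<close>, the sums of
  the legal index lists in \<open>{1..k}\<close> are exactly \<open>0, \<dots>, G k\<close>, each attained once: the lists
  avoiding \<open>k + 1\<close> give \<open>0, \<dots>, G k\<close>, and those starting with \<open>k + 1\<close> give
  \<open>a (k + 1) + (0, \<dots>, G (p k)) = G k + 1, \<dots>, G (k + 1)\<close>. So \<open>a i\<close> is the least positive
  integer not representable by \<open>a 1, \<dots>, a (i - 1)\<close>, which forces every Generacci sequence to
  be \<open>a\<close> and makes decompositions unique.\<close>

definition compatible_below :: "nat \<Rightarrow> nat \<Rightarrow> nat \<Rightarrow> nat" where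
  "compatible_below s b k = b * (k div b - s)"

lemma compatible_below_le: "compatible_below s b k \<le> k"
proof -
  have "b * (k div b - s) \<le> b * (k div b)" by simp
  also have "\<dots> \<le> k" by (simp add: mult.commute)
  finally show ?thesis unfolding compatible_below_def .
qed

function gen_bound :: "nat \<Rightarrow> nat \<Rightarrow> nat \<Rightarrow> nat" where
  "gen_bound s b 0 = 0"
| "gen_bound s b (Suc k) = gen_bound s b k + 1 + gen_bound s b (compatible_below s b k)"
  by pat_completeness auto
termination
  by (relation "measure (\<lambda>(s, b, k). k)") (auto simp: le_imp_less_Suc compatible_below_le)

definition gen_seq :: "nat \<Rightarrow> nat \<Rightarrow> nat \<Rightarrow> nat" where
  "gen_seq s b i = gen_bound s b (i - 1) + 1"

lemma gen_seq_Suc [simp]: "gen_seq s b (Suc k) = gen_bound s b k + 1"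
  by (simp add: gen_seq_def)

lemma compatible_below_induct [case_names 0 Suc]:
  assumes "P 0" "\<And>k. P k \<Longrightarrow> P (compatible_below s b k) \<Longrightarrow> P (Suc k)"
  shows "P k"
proof (induction k rule: less_induct)
  case (less k)
  show ?case
  proof (cases k)
    case (Suc j)
    then show ?thesis
      using assms(2) less.IH[of j] less.IH[of "compatible_below s b j"] compatible_below_le[of s b j]
      by simp
  qed (use assms(1) in simp)
qed

lemma gen_bound_strict_mono: "strict_mono (gen_bound s b)"
  by (simp add: strict_mono_Suc_iff)

lemma le_gen_bound: "k \<le> gen_bound s b k"
  by (induction k) auto

lemma gen_seq_strict_mono_on: "strict_mono_on {1..} (gen_seq s b)"
  by (rule strict_mono_onI) (auto simp: gen_seq_def strict_mono_less[OF gen_bound_strict_mono])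

definition index_legal :: "nat \<Rightarrow> nat \<Rightarrow> nat list \<Rightarrow> bool" where
  "index_legal s b = successively (\<lambda>i j. (j - 1) div b + s < (i - 1) div b)"

lemma bin_gap_imp_less:
  assumes "(j - 1) div b + s < (i - 1) div b"
  shows "j < (i::nat)"
proof (rule ccontr)
  assume "\<not> j < i"
  then have "(i - 1) div b \<le> (j - 1) div b" by (simp add: div_le_mono)
  with assms show False by simp
qed

lemma index_legal_sorted:
  assumes "index_legal s b ks"
  shows "sorted_wrt (>) ks"
proof -
  have "transp (\<lambda>i j::nat. (j - 1) div b + s < (i - 1) div b)"
    by (rule transpI) simp
  then have "sorted_wrt (\<lambda>i j. (j - 1) div b + s < (i - 1) div b) ks"
    using assms by (simp add: index_legal_def successively_conv_sorted_wrt)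
  then show ?thesis by (rule sorted_wrt_mono_rel[rotated]) (metis bin_gap_imp_less)
qed

lemma bin_gap_iff_le_compatible_below:
  assumes "1 \<le> b" "1 \<le> j"
  shows "(j - 1) div b + s < k div b \<longleftrightarrow> j \<le> compatible_below s b k"
proof (cases "s < k div b")
  case True
  have "(j - 1) div b + s < k div b \<longleftrightarrow> (j - 1) div b < k div b - s" using True by linarith
  also have "\<dots> \<longleftrightarrow> j - 1 < (k div b - s) * b" using assms by (simp add: div_less_iff_less_mult)
  also have "\<dots> \<longleftrightarrow> j \<le> compatible_below s b k"
    using assms by (auto simp: compatible_below_def mult.commute)
  finally show ?thesis .
qed (use assms in \<open>auto simp: compatible_below_def\<close>)

lemma index_legal_Cons_top:
  assumes "1 \<le> b" "set ks \<subseteq> {1..}"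
  shows "index_legal s b (Suc k # ks) \<longleftrightarrow>
    index_legal s b ks \<and> set ks \<subseteq> {..compatible_below s b k}"
proof (cases ks)
  case (Cons j js)
  have "index_legal s b ks \<Longrightarrow> set ks \<subseteq> {..j}"
    using index_legal_sorted[of s b ks] Cons by auto
  then show ?thesis
    using Cons assms bin_gap_iff_le_compatible_below[OF assms(1), of j s k]
    by (auto simp: index_legal_def intro: order_trans)
qed (simp add: index_legal_def)

lemma index_legal_top_cases:
  assumes "index_legal s b ks" "set ks \<subseteq> {1..Suc k}"
  obtains "set ks \<subseteq> {1..k}" | js where "ks = Suc k # js"
proof (cases ks)
  case (Cons i js)
  show ?thesis
  proof (cases "i = Suc k")
    case False
    then have "i \<le> k" using assms(2) Cons by auto
    moreover have "\<forall>j\<in>set js. j < i" using index_legal_sorted[OF assms(1)] Cons by simp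
    ultimately have "set ks \<subseteq> {1..k}" using assms(2) Cons by fastforce
    then show ?thesis by (rule that(1))
  qed (use Cons that(2) in blast)
qed (use that(1) in simp)

lemma sum_gen_seq_le_gen_bound:
  assumes "1 \<le> b" "index_legal s b ks" "set ks \<subseteq> {1..k}"
  shows "sum_list (map (gen_seq s b) ks) \<le> gen_bound s b k"
  using assms(2,3)
proof (induction k arbitrary: ks rule: compatible_below_induct[where s = s and b = b])
  case (Suc k)
  from Suc.prems show ?case
  proof (cases rule: index_legal_top_cases)
    case 1
    then show ?thesis using Suc.IH(1) Suc.prems(1) by fastforce
  next
    case (2 js)
    moreover have "set js \<subseteq> {1..}" using 2 Suc.prems by auto
    ultimately have "index_legal s b js" "set js \<subseteq> {1..compatible_below s b k}"
      using Suc.prems index_legal_Cons_top[OF assms(1)] by auto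
    then have "sum_list (map (gen_seq s b) js) \<le> gen_bound s b (compatible_below s b k)"
      by (rule Suc.IH(2))
    then show ?thesis using 2 by simp
  qed
qed simp

lemma ex_index_legal_sum_eq:
  assumes "1 \<le> b" "m \<le> gen_bound s b k"
  shows "\<exists>ks. set ks \<subseteq> {1..k} \<and> index_legal s b ks \<and> sum_list (map (gen_seq s b) ks) = m"
  using assms(2)
proof (induction k arbitrary: m rule: compatible_below_induct[where s = s and b = b])
  case 0
  then show ?case by (intro exI[of _ "[]"]) (simp add: index_legal_def)
next
  case (Suc k)
  show ?case
  proof (cases "m \<le> gen_bound s b k")
    case True
    then show ?thesis using Suc.IH(1) by (meson atLeastatMost_subset_iff le_SucI order.trans order_refl)
  next
    case False
    define p where "p = compatible_below s b k"
    have "m - gen_seq s b (Suc k) \<le> gen_bound s b p"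
      using Suc.prems by (simp add: p_def)
    then obtain js where js: "set js \<subseteq> {1..p}" "index_legal s b js"
      "sum_list (map (gen_seq s b) js) = m - gen_seq s b (Suc k)"
      using Suc.IH(2) p_def by blast
    have "set js \<subseteq> {1..}" using js(1) by auto
    then have "index_legal s b (Suc k # js)"
      using js index_legal_Cons_top[OF assms(1), of js] p_def by auto
    moreover have "set (Suc k # js) \<subseteq> {1..Suc k}"
      using js(1) compatible_below_le[of s b k] p_def by auto
    moreover have "sum_list (map (gen_seq s b) (Suc k # js)) = m"
      using js(3) False by simp
    ultimately show ?thesis by blast
  qed
qed

lemma index_legal_sum_inj:
  assumes "1 \<le> b"
    and "index_legal s b ks" "set ks \<subseteq> {1..k}"
    and "index_legal s b ks'" "set ks' \<subseteq> {1..k}"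
    and "sum_list (map (gen_seq s b) ks) = sum_list (map (gen_seq s b) ks')"
  shows "ks = ks'"
  using assms(2-)
proof (induction k arbitrary: ks ks' rule: compatible_below_induct[where s = s and b = b])
  case 0
  then show ?case by simp
next
  case (Suc k)
  let ?sum = "\<lambda>ks. sum_list (map (gen_seq s b) ks)"
  have below_top: "?sum ks < ?sum (Suc k # js)"
    if "index_legal s b ks" "set ks \<subseteq> {1..k}" for ks js
    using sum_gen_seq_le_gen_bound[OF assms(1) that] by simp
  have tail: "index_legal s b js \<and> set js \<subseteq> {1..compatible_below s b k}"
    if "index_legal s b (Suc k # js)" "set (Suc k # js) \<subseteq> {1..Suc k}" for js
  proof -
    have "set js \<subseteq> {1..}" using that(2) by auto
    then show ?thesis using that index_legal_Cons_top[OF assms(1), of js] by auto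
  qed
  from Suc.prems(1,2) show ?case
  proof (cases rule: index_legal_top_cases)
    case 1
    from Suc.prems(3,4) show ?thesis
    proof (cases rule: index_legal_top_cases)
      case 1
      with \<open>set ks \<subseteq> {1..k}\<close> show ?thesis using Suc.IH(1) Suc.prems(1,3,5) by simp
    next
      case (2 js')
      then show ?thesis using below_top[of ks js'] Suc.prems(1,5) 1 by simp
    qed
  next
    case (2 js)
    from Suc.prems(3,4) show ?thesis
    proof (cases rule: index_legal_top_cases)
      case 1
      then show ?thesis using below_top[of ks' js] Suc.prems(3,5) 2 by simp
    next
      case (2 js')
      have "js = js'"
        using Suc.IH(2) tail[of js] tail[of js'] Suc.prems \<open>ks = Suc k # js\<close> \<open>ks' = Suc k # js'\<close>
        by simp
      then show ?thesis using \<open>ks = Suc k # js\<close> \<open>ks' = Suc k # js'\<close> by simp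
    qed
  qed
qed

lemma ex_index_legal_iff:
  assumes "1 \<le> b"
  shows "(\<exists>ks. ks \<noteq> [] \<and> set ks \<subseteq> {1..k} \<and> index_legal s b ks \<and>
            sum_list (map (gen_seq s b) ks) = m) \<longleftrightarrow> 1 \<le> m \<and> m \<le> gen_bound s b k"
proof
  assume "\<exists>ks. ks \<noteq> [] \<and> set ks \<subseteq> {1..k} \<and> index_legal s b ks \<and>
            sum_list (map (gen_seq s b) ks) = m"
  then obtain ks where ks: "ks \<noteq> []" "set ks \<subseteq> {1..k}" "index_legal s b ks"
    "sum_list (map (gen_seq s b) ks) = m" by blast
  then obtain i js where "ks = i # js" by (cases ks) auto
  then have "1 \<le> m" using ks(4) gen_seq_def by simp
  then show "1 \<le> m \<and> m \<le> gen_bound s b k"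
    using sum_gen_seq_le_gen_bound[OF assms ks(3,2)] ks(4) by simp
next
  assume m: "1 \<le> m \<and> m \<le> gen_bound s b k"
  then obtain ks where "set ks \<subseteq> {1..k}" "index_legal s b ks" "sum_list (map (gen_seq s b) ks) = m"
    using ex_index_legal_sum_eq[OF assms] by blast
  moreover from this m have "ks \<noteq> []" by auto
  ultimately show "\<exists>ks. ks \<noteq> [] \<and> set ks \<subseteq> {1..k} \<and> index_legal s b ks \<and>
            sum_list (map (gen_seq s b) ks) = m"
    by blast
qed

lemma gen_legal_decomp_iff_successively:
  "gen_legal_decomp s b a T m xs \<longleftrightarrow> xs \<noteq> [] \<and> set xs \<subseteq> T \<and> sum_list xs = m \<and>
     successively (\<lambda>x y. y < x \<and> (\<forall>j::int. \<not> {x, y} \<subseteq> (\<Union>t\<in>{j - int s .. j}. gen_bin b a t))) xs"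
  unfolding gen_legal_decomp_def sorted_wrt_iff_nth_Suc_transp[OF transp_on_greater]
    successively_conv_nth by blast

lemma mem_gen_bin_iff:
  assumes "strict_mono_on {1..} a" "1 \<le> b" "1 \<le> j"
  shows "a j \<in> gen_bin b a t \<longleftrightarrow> t = int ((j - 1) div b + 1)"
proof (cases "t \<le> 0")
  case False
  define n where "n = nat t - 1"
  have "a j \<in> gen_bin b a t \<longleftrightarrow> j \<in> {b * n + 1 .. b * (n + 1)}"
    using False assms inj_on_image_mem_iff[OF strict_mono_on_imp_inj_on[OF assms(1)]]
    by (auto simp: gen_bin_def n_def)
  also have "\<dots> \<longleftrightarrow> (j - 1) div b = n"
  proof
    assume "j \<in> {b * n + 1 .. b * (n + 1)}"
    then show "(j - 1) div b = n" by (intro div_nat_eqI) auto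
  next
    assume n: "(j - 1) div b = n"
    have "b * n \<le> j - 1" "j - 1 < b * n + b"
      using assms(2) n[symmetric] by (simp_all add: mult.commute div_times_less_eq_dividend
          add.commute dividend_less_times_div)
    then show "j \<in> {b * n + 1 .. b * (n + 1)}" using assms(3) by auto
  qed
  finally show ?thesis using False n_def by auto
qed (auto simp: gen_bin_def)

lemma window_gap_iff:
  fixes bi bj s :: nat
  assumes "bj \<le> bi"
  shows "(\<forall>t0::int. \<not> (t0 - int s \<le> int bi + 1 \<and> int bi + 1 \<le> t0 \<and>
                         t0 - int s \<le> int bj + 1 \<and> int bj + 1 \<le> t0))
    \<longleftrightarrow> bj + s < bi"
proof
  assume "\<forall>t0::int. \<not> (t0 - int s \<le> int bi + 1 \<and> int bi + 1 \<le> t0 \<and>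
                         t0 - int s \<le> int bj + 1 \<and> int bj + 1 \<le> t0)"
  then show "bj + s < bi" using assms by (auto dest: spec[of _ "int bi + 1"])
qed auto

lemma separated_iff_bin_gap:
  assumes sm: "strict_mono_on {1..} a" and "1 \<le> b" "1 \<le> i" "1 \<le> j"
  shows "(a j < a i \<and> (\<forall>t0::int. \<not> {a i, a j} \<subseteq> (\<Union>t\<in>{t0 - int s .. t0}. gen_bin b a t)))
    \<longleftrightarrow> (j - 1) div b + s < (i - 1) div b"
proof (cases "j < i")
  case True
  define bi bj where "bi = (i - 1) div b" and "bj = (j - 1) div b"
  have window: "{a i, a j} \<subseteq> (\<Union>t\<in>{t0 - int s .. t0}. gen_bin b a t) \<longleftrightarrow>
      t0 - int s \<le> int bi + 1 \<and> int bi + 1 \<le> t0 \<and> t0 - int s \<le> int bj + 1 \<and> int bj + 1 \<le> t0"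
    for t0
    using mem_gen_bin_iff[OF sm assms(2)] assms(3,4) unfolding bi_def bj_def by auto
  have "bj \<le> bi"
    using True unfolding bi_def bj_def by (simp add: div_le_mono)
  then have "(\<forall>t0::int. \<not> {a i, a j} \<subseteq> (\<Union>t\<in>{t0 - int s .. t0}. gen_bin b a t)) \<longleftrightarrow> bj + s < bi"
    unfolding window by (rule window_gap_iff)
  moreover have "a j < a i"
    using strict_mono_on_less[OF sm] assms(3,4) True by simp
  ultimately show ?thesis unfolding bi_def bj_def by blast
next
  case False
  then have "\<not> a j < a i"
    using strict_mono_on_less[OF sm, of j i] assms(3,4) by simp
  moreover have "\<not> (j - 1) div b + s < (i - 1) div b"
    using False bin_gap_imp_less by blast
  ultimately show ?thesis by blast
qed

lemma map_subset_image_iff: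
  assumes "inj_on a A" "I \<subseteq> A" "set ks \<subseteq> A"
  shows "set (map a ks) \<subseteq> a ` I \<longleftrightarrow> set ks \<subseteq> I"
proof
  assume img: "set (map a ks) \<subseteq> a ` I"
  show "set ks \<subseteq> I"
  proof
    fix x assume "x \<in> set ks"
    then show "x \<in> I" using img inj_on_image_mem_iff[OF assms(1) _ assms(2)] assms(3) by auto
  qed
qed auto

lemma gen_legal_decomp_map_iff:
  assumes sm: "strict_mono_on {1..} a" and "1 \<le> b" "I \<subseteq> {1..}" "set ks \<subseteq> {1..}"
  shows "gen_legal_decomp s b a (a ` I) m (map a ks) \<longleftrightarrow>
    ks \<noteq> [] \<and> set ks \<subseteq> I \<and> index_legal s b ks \<and> sum_list (map a ks) = m"
proof -
  have legal: "successively (\<lambda>x y. y < x \<and>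
        (\<forall>j::int. \<not> {x, y} \<subseteq> (\<Union>t\<in>{j - int s .. j}. gen_bin b a t))) (map a ks)
      \<longleftrightarrow> index_legal s b ks"
    unfolding successively_map index_legal_def
  proof (rule successively_cong)
    fix i j assume "i \<in> set ks" "j \<in> set ks"
    then have "1 \<le> i" "1 \<le> j" using assms(4) by auto
    then show "(a j < a i \<and> (\<forall>t0::int. \<not> {a i, a j} \<subseteq> (\<Union>t\<in>{t0 - int s .. t0}. gen_bin b a t)))
      \<longleftrightarrow> (j - 1) div b + s < (i - 1) div b"
      by (rule separated_iff_bin_gap[OF sm assms(2)])
  qed simp
  then show ?thesis
    unfolding gen_legal_decomp_iff_successively
      map_subset_image_iff[OF strict_mono_on_imp_inj_on[OF sm] assms(3,4)]
    by (simp only: Nil_is_map_conv) blast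
qed

lemma gen_legal_decomp_obtain_indices:
  assumes "gen_legal_decomp s b a (a ` I) m xs"
  obtains ks where "xs = map a ks" "set ks \<subseteq> I"
proof -
  have "xs \<in> lists (a ` I)"
    using assms by (simp add: gen_legal_decomp_def lists_eq_set)
  then obtain ks where "ks \<in> lists I" "xs = map a ks"
    unfolding lists_image by blast
  then show ?thesis using that by (simp add: lists_eq_set)
qed

lemma ex_gen_legal_decomp_iff:
  assumes sm: "strict_mono_on {1..} a" and b: "1 \<le> b"
    and agree: "\<forall>j\<in>{1..k}. a j = gen_seq s b j"
  shows "(\<exists>xs. gen_legal_decomp s b a (a ` {1..k}) m xs) \<longleftrightarrow> 1 \<le> m \<and> m \<le> gen_bound s b k"
proof -
  have "(\<exists>xs. gen_legal_decomp s b a (a ` {1..k}) m xs) \<longleftrightarrow>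
      (\<exists>ks. set ks \<subseteq> {1..k} \<and> gen_legal_decomp s b a (a ` {1..k}) m (map a ks))"
  proof
    assume "\<exists>xs. gen_legal_decomp s b a (a ` {1..k}) m xs"
    then obtain xs where xs: "gen_legal_decomp s b a (a ` {1..k}) m xs" ..
    then obtain ks where "xs = map a ks" "set ks \<subseteq> {1..k}"
      by (rule gen_legal_decomp_obtain_indices)
    with xs show "\<exists>ks. set ks \<subseteq> {1..k} \<and> gen_legal_decomp s b a (a ` {1..k}) m (map a ks)"
      by blast
  qed blast
  also have "\<dots> \<longleftrightarrow> (\<exists>ks. ks \<noteq> [] \<and> set ks \<subseteq> {1..k} \<and> index_legal s b ks \<and>
      sum_list (map (gen_seq s b) ks) = m)"
  proof (intro ex_cong1)
    fix ks
    show "set ks \<subseteq> {1..k} \<and> gen_legal_decomp s b a (a ` {1..k}) m (map a ks) \<longleftrightarrow>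
      ks \<noteq> [] \<and> set ks \<subseteq> {1..k} \<and> index_legal s b ks \<and> sum_list (map (gen_seq s b) ks) = m"
    proof (cases "set ks \<subseteq> {1..k}")
      case True
      then have "sum_list (map a ks) = sum_list (map (gen_seq s b) ks)"
        using agree by (metis map_cong subsetD)
      moreover have "{1..k} \<subseteq> {1..}" "set ks \<subseteq> {1..}" using True by auto
      ultimately show ?thesis using True gen_legal_decomp_map_iff[OF sm b] by simp
    qed simp
  qed
  also have "\<dots> \<longleftrightarrow> 1 \<le> m \<and> m \<le> gen_bound s b k"
    by (rule ex_index_legal_iff[OF b])
  finally show ?thesis .
qed

lemma generacci_condition_iff:
  assumes sm: "strict_mono_on {1..} a" and b: "1 \<le> b" and i: "1 \<le> i"
    and agree: "\<forall>j\<in>{1..<i}. a j = gen_seq s b j"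
  shows "(0 < a i \<and> \<not> (\<exists>xs. gen_legal_decomp s b a (a ` {1..<i}) (a i) xs) \<and>
      (\<forall>m. 0 < m \<and> m < a i \<longrightarrow> (\<exists>xs. gen_legal_decomp s b a (a ` {1..<i}) m xs)))
    \<longleftrightarrow> a i = gen_seq s b i"
proof -
  have "{1..<i} = {1..i - 1}" using i by auto
  then have decomp: "(\<exists>xs. gen_legal_decomp s b a (a ` {1..<i}) m xs) \<longleftrightarrow>
      1 \<le> m \<and> m \<le> gen_bound s b (i - 1)" for m
    using ex_gen_legal_decomp_iff[OF sm b] agree by simp
  show ?thesis
    unfolding decomp gen_seq_def
    by (auto dest: spec[of _ "gen_bound s b (i - 1) + 1"])
qed

lemma is_generacci_gen_seq:
  assumes "1 \<le> b"
  shows "is_generacci s b (gen_seq s b)"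
  unfolding is_generacci_def
  using generacci_condition_iff[OF gen_seq_strict_mono_on assms] gen_seq_strict_mono_on by simp

lemma is_generacci_eq_gen_seq:
  assumes b: "1 \<le> b" and gen: "is_generacci s b a" and i: "1 \<le> i"
  shows "a i = gen_seq s b i"
  using i
proof (induction i rule: less_induct)
  case (less i)
  have sm: "strict_mono_on {1..} a" using gen by (simp add: is_generacci_def)
  have "\<forall>j\<in>{1..<i}. a j = gen_seq s b j" using less.IH by simp
  moreover have "0 < a i \<and> \<not> (\<exists>xs. gen_legal_decomp s b a (a ` {1..<i}) (a i) xs) \<and>
      (\<forall>m. 0 < m \<and> m < a i \<longrightarrow> (\<exists>xs. gen_legal_decomp s b a (a ` {1..<i}) m xs))"
    using gen less.prems unfolding is_generacci_def by blast
  ultimately show ?case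
    using generacci_condition_iff[OF sm b less.prems] by blast
qed

lemma is_generacci_ex1_decomp:
  assumes b: "1 \<le> b" and gen: "is_generacci s b a" and m: "0 < m"
  shows "\<exists>!xs. gen_legal_decomp s b a (a ` {1..}) m xs"
proof -
  have sm: "strict_mono_on {1..} a" using gen by (simp add: is_generacci_def)
  have indices: "gen_legal_decomp s b a (a ` {1..}) m (map a ks) \<longleftrightarrow>
      ks \<noteq> [] \<and> set ks \<subseteq> {1..} \<and> index_legal s b ks \<and> sum_list (map (gen_seq s b) ks) = m"
    if "set ks \<subseteq> {1..}" for ks
  proof -
    have "sum_list (map a ks) = sum_list (map (gen_seq s b) ks)"
      using that is_generacci_eq_gen_seq[OF b gen] by (metis atLeast_iff map_cong subsetD)
    then show ?thesis using gen_legal_decomp_map_iff[OF sm b order_refl that] by simp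
  qed
  obtain ks where "ks \<noteq> []" "set ks \<subseteq> {1..m}" "index_legal s b ks"
    "sum_list (map (gen_seq s b) ks) = m"
    using ex_index_legal_iff[OF b, of m s m] m le_gen_bound[of m s b] by auto
  moreover from this have "set ks \<subseteq> {1..}" by auto
  ultimately have "gen_legal_decomp s b a (a ` {1..}) m (map a ks)"
    using indices[of ks] by simp
  moreover have "xs = map a ks" if xs: "gen_legal_decomp s b a (a ` {1..}) m xs" for xs
  proof -
    obtain ks' where ks': "xs = map a ks'" "set ks' \<subseteq> {1..}"
      using xs by (rule gen_legal_decomp_obtain_indices)
    define K where "K = sum_list ks + sum_list ks'"
    have "set ks \<subseteq> {1..K}" "set ks' \<subseteq> {1..K}"
      using \<open>set ks \<subseteq> {1..m}\<close> ks'(2) member_le_sum_list[of _ ks] member_le_sum_list[of _ ks']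
      unfolding K_def by fastforce+
    then have "ks' = ks"
      using index_legal_sum_inj[OF b] indices[of ks'] xs ks' \<open>index_legal s b ks\<close>
        \<open>sum_list (map (gen_seq s b) ks) = m\<close>
      by auto
    then show ?thesis using ks'(1) by simp
  qed
  ultimately show ?thesis by blast
qed

theorem mainTheorem3:
  fixes s b :: nat
  assumes "1 \<le> s" and "1 \<le> b"
  shows "(\<exists>a. is_generacci s b a) \<and>
         (\<forall>a a'. is_generacci s b a \<and> is_generacci s b a' \<longrightarrow> (\<forall>i\<ge>1. a i = a' i)) \<and>
         (\<forall>a. is_generacci s b a \<longrightarrow>
            (\<forall>m>0. \<exists>!xs. gen_legal_decomp s b a (a ` {1..}) m xs))"
  using is_generacci_gen_seq[OF assms(2)] is_generacci_eq_gen_seq[OF assms(2)]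
    is_generacci_ex1_decomp[OF assms(2)]
  by metis

end
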